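(* Let $\tau\in\mathcal{H}$ with $\Im(\tau)\ge\sqrt3/4$ and let $z\in\mathbb{C}$ with $0\le\Im(z)\le\Im(\tau)/4$. Then $$|\theta_{00}(z,\tau)-\theta_{01}(z,\tau)|<|\theta_{00}(z,\tau)+\theta_{01}(z,\tau)|;$$ consequently $\Re\left(\frac{\theta_{01}(z,\tau)}{\theta_{00}(z,\tau)}\right)>0$ and $\Re\left(\frac{\theta_{01}(0,\tau)}{\theta_{00}(0,\tau)}\right)>0$.
   Context: For $z\in\mathbb{C}$ and $\tau$ in the upper half-plane $\mathcal{H}=\{\tau\in\mathbb{C}:\Im\tau>0\}$, $\theta(z,\tau)=\sum_{n\in\mathbb{Z}}\exp(\pi i\tau n^2+2\pi i n z)$. Set $\theta_{00}(z,\tau)=\theta(z,\tau)$ and $\theta_{01}(z,\tau)=\theta(z+\tfrac12,\tau)$. (The paper states the hypothesis as $\Im\tau$ at least an unspecified constant which it notes is $\le\sqrt3/4$; here $\sqrt3/4$ is used.) *)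

theory Defs
  imports "HOL-Analysis.Analysis"
begin

definition jtheta :: "complex \<Rightarrow> complex \<Rightarrow> complex" where
  "jtheta z \<tau> = (\<Sum>\<^sub>\<infinity>n\<in>(UNIV::int set).
      exp (pi * \<i> * \<tau> * (of_int n)^2 + 2 * pi * \<i> * of_int n * z))"

definition theta00 :: "complex \<Rightarrow> complex \<Rightarrow> complex" where
  "theta00 z \<tau> = jtheta z \<tau>"

definition theta01 :: "complex \<Rightarrow> complex \<Rightarrow> complex" where
  "theta01 z \<tau> = jtheta (z + 1/2) \<tau>"

end

theory Submission
  imports Defs
begin

(*
  Write F n = exp(pi i tau n^2 + 2 pi i n z) for the terms of theta00; those of theta01 are
  (-1)^n F n. Hence theta00 - theta01 and theta00 + theta01 - 2 are the sums over n \<noteq> 0 of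
  (1 \<mp> (-1)^n) F n, whose norms add up to at most 2 * (sum of |F n| over n \<noteq> 0). So the inequality
  holds once the constant term F 0 = 1 dominates the rest. With v = exp(-pi Im tau / 2) < 5/9, the
  bounds 0 \<le> Im z \<le> Im tau / 4 give |F 1| \<le> v^2, |F (-1)| \<le> v and |F n| \<le> v^(3|n|) for |n| \<ge> 2,
  and v + v^2 + 2 v^6 / (1 - v^3) < 1. Finally |A - B| < |A + B| says Re (B / A) > 0.
*)

lemma norm_diff_less_norm_add_if_dominant_term:
  fixes f s :: "'a \<Rightarrow> complex" and n\<^sub>0 :: 'a
  assumes summable: "(\<lambda>n. norm (f n)) summable_on -{n\<^sub>0}"
    and dominant: "(\<Sum>\<^sub>\<infinity>n\<in>-{n\<^sub>0}. norm (f n)) < 1"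
    and f0: "f n\<^sub>0 = 1" and s0: "s n\<^sub>0 = 1" and sign: "\<And>n. s n = 1 \<or> s n = -1"
  shows "cmod (infsum f UNIV - (\<Sum>\<^sub>\<infinity>n. s n * f n)) < cmod (infsum f UNIV + (\<Sum>\<^sub>\<infinity>n. s n * f n))"
proof -
  let ?A = "-{n\<^sub>0}"
  have norm_sum_signs: "norm ((1 - s n) * f n) + norm ((1 + s n) * f n) = 2 * norm (f n)" for n
    using sign[of n] by (auto simp: norm_mult)
  have abs_summable: "(\<lambda>n. norm (c n * f n)) summable_on ?A" if "\<And>n. norm (c n) \<le> 2" for c
  proof (rule Infinite_Sum.abs_summable_on_comparison_test')
    show "(\<lambda>n. 2 * norm (f n)) summable_on ?A"
      using summable by (rule summable_on_cmult_right)
    show "norm (c n * f n) \<le> 2 * norm (f n)" for n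
      using that[of n] by (simp add: norm_mult mult_right_mono)
  qed
  have sf: "f summable_on ?A"
    using abs_summable[of "\<lambda>_. 1"] by (simp add: abs_summable_summable)
  have norm_s: "norm (s n) \<le> 2" for n
    using sign[of n] by auto
  have ssf: "(\<lambda>n. s n * f n) summable_on ?A"
    using abs_summable[OF norm_s] by (rule abs_summable_summable)
  have norm_1_pm_s: "norm (1 - s n) \<le> 2" "norm (1 + s n) \<le> 2" for n
    using sign[of n] by auto
  have abs_minus: "(\<lambda>n. norm ((1 - s n) * f n)) summable_on ?A"
    by (rule abs_summable) (rule norm_1_pm_s)
  have abs_plus: "(\<lambda>n. norm ((1 + s n) * f n)) summable_on ?A"
    by (rule abs_summable) (rule norm_1_pm_s)
  have sum_split_off: "infsum g UNIV = g n\<^sub>0 + infsum g ?A" if "g summable_on ?A" for g :: "'a \<Rightarrow> complex"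
  proof -
    have "insert n\<^sub>0 ?A = UNIV" by auto
    then show ?thesis using infsum_insert[OF that, of n\<^sub>0] by simp
  qed
  define D where "D = (\<Sum>\<^sub>\<infinity>n\<in>?A. (1 - s n) * f n)"
  define P where "P = (\<Sum>\<^sub>\<infinity>n\<in>?A. (1 + s n) * f n)"
  have diff: "infsum f UNIV - (\<Sum>\<^sub>\<infinity>n. s n * f n) = D"
    unfolding D_def sum_split_off[OF sf] sum_split_off[OF ssf] f0 s0
    using infsum_add[OF sf summable_on_uminus[THEN iffD2, OF ssf]] by (simp add: infsum_uminus algebra_simps)
  have add: "infsum f UNIV + (\<Sum>\<^sub>\<infinity>n. s n * f n) = 2 + P"
    unfolding P_def sum_split_off[OF sf] sum_split_off[OF ssf] f0 s0
    using infsum_add[OF sf ssf] by (simp add: algebra_simps)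
  have "norm D + norm P \<le> (\<Sum>\<^sub>\<infinity>n\<in>?A. norm ((1 - s n) * f n)) + (\<Sum>\<^sub>\<infinity>n\<in>?A. norm ((1 + s n) * f n))"
    unfolding D_def P_def using abs_minus abs_plus by (intro add_mono norm_infsum_bound)
  also have "\<dots> = 2 * (\<Sum>\<^sub>\<infinity>n\<in>?A. norm (f n))"
    using infsum_add[OF abs_minus abs_plus] by (simp add: norm_sum_signs infsum_cmult_right')
  also have "\<dots> < 2" using dominant by simp
  finally have "norm D + norm P < 2" .
  moreover have "2 - norm P \<le> norm (2 + P)"
    using norm_diff_ineq[of "2::complex" P] by simp
  ultimately show ?thesis unfolding diff add by linarith
qed

lemma Re_divide_pos_if_norm_diff_less:
  fixes A B :: complex
  assumes "cmod (A - B) < cmod (A + B)"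
  shows "Re (B / A) > 0"
proof -
  have "(cmod (A - B))\<^sup>2 < (cmod (A + B))\<^sup>2"
    using assms by (intro power_strict_mono) auto
  then have "(Re A - Re B)\<^sup>2 + (Im A - Im B)\<^sup>2 < (Re A + Re B)\<^sup>2 + (Im A + Im B)\<^sup>2"
    by (simp add: cmod_power2)
  then have pos: "Re A * Re B + Im A * Im B > 0"
    by (simp add: power2_eq_square algebra_simps)
  then have "cmod A ^ 2 > 0"
    by auto
  moreover have "Re (B / A) = (Re A * Re B + Im A * Im B) / cmod A ^ 2"
    by (simp add: Re_divide cmod_power2 algebra_simps)
  ultimately show ?thesis
    using pos by simp
qed

definition theta_majorant :: "real \<Rightarrow> int \<Rightarrow> real" where
  "theta_majorant v n = (if n = 1 then v\<^sup>2 else if n = -1 then v else v ^ (3 * nat \<bar>n\<bar>))"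

lemma exp_quadratic_le_theta_majorant:
  fixes a b :: real and n :: int
  assumes "0 \<le> a" "0 \<le> b" "b \<le> a / 2"
  shows "exp (- a * (of_int n)\<^sup>2 - b * of_int n) \<le> theta_majorant (exp (- a / 2)) n"
proof -
  consider "n = 1" | "n = -1" | "n \<noteq> 1" "n \<noteq> -1" by blast
  then show ?thesis
  proof cases
    case 3
    let ?m = "\<bar>real_of_int n\<bar>"
    have "n = 0 \<or> 2 \<le> \<bar>n\<bar>"
      using 3 by auto
    then have "2 * ?m \<le> ?m * ?m"
    proof
      assume "2 \<le> \<bar>n\<bar>"
      then have "2 \<le> ?m" by linarith
      then show ?thesis by (intro mult_right_mono) auto
    qed simp
    then have "2 * a * ?m \<le> a * (of_int n)\<^sup>2"
      using assms(1) mult_left_mono by (fastforce simp: power2_eq_square abs_mult_self_eq)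
    moreover have "- b * of_int n \<le> b * ?m"
      using assms(2) by (simp add: abs_if)
    moreover have "b * ?m \<le> a / 2 * ?m"
      using assms(3) by (intro mult_right_mono) auto
    ultimately have "- a * (of_int n)\<^sup>2 - b * of_int n \<le> real (3 * nat \<bar>n\<bar>) * (- a / 2)"
      by (simp add: algebra_simps)
    then show ?thesis
      using 3 by (simp add: theta_majorant_def flip: exp_of_nat_mult)
  qed (use assms in \<open>auto simp: theta_majorant_def simp flip: exp_of_nat_mult\<close>)
qed

lemma has_sum_power_from_2:
  fixes w :: real assumes "0 \<le> w" "w < 1"
  shows "((\<lambda>k::nat. w ^ (k + 2)) has_sum (w\<^sup>2 / (1 - w))) UNIV"
proof -
  have "(\<lambda>k. w\<^sup>2 * w ^ k) sums (w\<^sup>2 * (1 / (1 - w)))"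
    using geometric_sums[of w] assms by (intro sums_mult) auto
  then have "(\<lambda>k::nat. w ^ (k + 2)) sums (w\<^sup>2 / (1 - w))"
    by (simp add: power_add power2_eq_square mult_ac)
  then show ?thesis
    using assms by (intro sums_nonneg_imp_has_sum) auto
qed

lemma theta_majorant_has_sum:
  fixes v :: real assumes "0 \<le> v" "v < 1"
  shows "(theta_majorant v has_sum (v + v\<^sup>2 + 2 * (v ^ 6 / (1 - v ^ 3)))) (- {0})"
proof -
  have w: "0 \<le> v ^ 3" "v ^ 3 < 1"
    using assms by (auto simp: power_less_one_iff)
  have tail: "(theta_majorant v has_sum (v ^ 6 / (1 - v ^ 3))) (g ` UNIV)"
    if "inj g" and g: "\<And>k. nat \<bar>g k\<bar> = k + 2" for g :: "nat \<Rightarrow> int"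
  proof (subst has_sum_reindex[OF that(1)])
    have "theta_majorant v (g k) = (v ^ 3) ^ (k + 2)" for k
      using g[of k] by (auto simp: theta_majorant_def power_add simp flip: power_mult)
    then show "((theta_majorant v \<circ> g) has_sum (v ^ 6 / (1 - v ^ 3))) UNIV"
      using has_sum_power_from_2[OF w] by (simp add: o_def flip: power_mult)
  qed
  define P where "P = range (\<lambda>k::nat. int k + 2)"
  define Q where "Q = range (\<lambda>k::nat. - int k - 2)"
  have "(theta_majorant v has_sum (v ^ 6 / (1 - v ^ 3))) P"
    unfolding P_def by (rule tail) (auto simp: inj_def)
  moreover have "(theta_majorant v has_sum (v ^ 6 / (1 - v ^ 3))) Q"
    unfolding Q_def by (rule tail) (auto simp: inj_def)
  moreover have "(theta_majorant v has_sum (v + v\<^sup>2)) {-1, 1}"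
    by (rule has_sum_finiteI) (auto simp: theta_majorant_def)
  ultimately have "(theta_majorant v has_sum (v + v\<^sup>2 + (v ^ 6 / (1 - v ^ 3) + v ^ 6 / (1 - v ^ 3))))
      ({-1, 1} \<union> (P \<union> Q))"
    by (intro has_sum_Un_disjoint) (auto simp: P_def Q_def)
  moreover have "{-1, 1} \<union> (P \<union> Q) = - {0}"
  proof -
    have "n \<in> P \<union> Q" if "\<bar>n\<bar> \<ge> 2" for n :: int
    proof (cases "n \<ge> 2")
      case True
      then have "n = int (nat (n - 2)) + 2" by simp
      then show ?thesis unfolding P_def by blast
    next
      case False
      then have "n = - int (nat (- n - 2)) - 2" using that by simp
      then show ?thesis unfolding Q_def by blast
    qed
    then show ?thesis by (force simp: P_def Q_def)
  qed
  ultimately show ?thesis by simp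
qed

lemma exp_neg_pi_sqrt3_div_8_le: "exp (- (pi * sqrt 3 / 8)) \<le> 5 / 9"
proof -
  have "sqrt 3 \<ge> 1.7"
    by (rule real_le_rsqrt) (simp add: power2_eq_square)
  then have "pi * sqrt 3 \<ge> 3 * 1.7"
    using pi_gt3 by (intro mult_mono) auto
  then have "exp (pi * sqrt 3 / 32) \<ge> 371 / 320"
    using exp_ge_add_one_self[of "pi * sqrt 3 / 32"] by linarith
  then have "exp (pi * sqrt 3 / 32) ^ 4 \<ge> (371 / 320) ^ 4"
    by (rule power_mono) simp
  moreover have "exp (pi * sqrt 3 / 32) ^ 4 = exp (pi * sqrt 3 / 8)"
    by (simp flip: exp_of_nat_mult)
  moreover have "(371 / 320 :: real) ^ 4 \<ge> 9 / 5"
    by (simp add: power_divide)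
  ultimately have "exp (pi * sqrt 3 / 8) \<ge> 9 / 5"
    by linarith
  then have "inverse (exp (pi * sqrt 3 / 8)) \<le> inverse (9 / 5)"
    by (rule le_imp_inverse_le) simp
  then show ?thesis
    by (simp add: exp_minus)
qed

lemma theta_majorant_tail_less_1:
  fixes v :: real assumes "0 \<le> v" "v \<le> 5 / 9"
  shows "v + v\<^sup>2 + 2 * (v ^ 6 / (1 - v ^ 3)) < 1"
proof -
  have pow: "v ^ k \<le> (5 / 9) ^ k" for k
    using assms by (intro power_mono)
  have "v ^ 6 / (1 - v ^ 3) \<le> (5 / 9) ^ 6 / (1 - (5 / 9) ^ 3)"
    using pow[of 6] pow[of 3] by (intro frac_le) (auto simp: power_divide)
  then have "2 * (v ^ 6 / (1 - v ^ 3)) \<le> 2 * ((5 / 9) ^ 6 / (1 - (5 / 9) ^ 3))"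
    by simp
  moreover have "v\<^sup>2 \<le> (5 / 9)\<^sup>2"
    by (rule pow)
  moreover have "5 / 9 + (5 / 9)\<^sup>2 + 2 * ((5 / 9) ^ 6 / (1 - (5 / 9) ^ 3)) < (1 :: real)"
    by (simp add: power_divide)
  ultimately show ?thesis
    using assms by linarith
qed

definition jtheta_term :: "complex \<Rightarrow> complex \<Rightarrow> int \<Rightarrow> complex" where
  "jtheta_term z \<tau> n = exp (pi * \<i> * \<tau> * (of_int n)\<^sup>2 + 2 * pi * \<i> * of_int n * z)"

lemma jtheta_eq_infsum_term: "jtheta z \<tau> = (\<Sum>\<^sub>\<infinity>n. jtheta_term z \<tau> n)"
  by (simp add: jtheta_def jtheta_term_def)

lemma jtheta_term_0 [simp]: "jtheta_term z \<tau> 0 = 1"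
  by (simp add: jtheta_term_def)

lemma norm_jtheta_term:
  "norm (jtheta_term z \<tau> n) = exp (- (pi * Im \<tau>) * (of_int n)\<^sup>2 - 2 * pi * Im z * of_int n)"
  by (simp add: jtheta_term_def algebra_simps)

lemma jtheta_term_add_half:
  "jtheta_term (z + 1 / 2) \<tau> n = (if even n then 1 else -1) * jtheta_term z \<tau> n"
proof -
  have "cis (pi * of_int n) = (if even n then 1 else -1)"
    by (simp add: complex_eq_iff)
  moreover have "pi * \<i> * \<tau> * (of_int n)\<^sup>2 + 2 * pi * \<i> * of_int n * (z + 1 / 2)
      = \<i> * complex_of_real (pi * of_int n) + (pi * \<i> * \<tau> * (of_int n)\<^sup>2 + 2 * pi * \<i> * of_int n * z)"
    by (simp add: algebra_simps)
  ultimately show ?thesis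
    by (simp add: jtheta_term_def exp_add cis_conv_exp)
qed

lemma jtheta_term_tail_less_1:
  assumes "Im \<tau> \<ge> sqrt 3 / 4" and "0 \<le> Im z" and "Im z \<le> Im \<tau> / 4"
  shows "(\<lambda>n. norm (jtheta_term z \<tau> n)) summable_on - {0}"
    and "(\<Sum>\<^sub>\<infinity>n\<in>- {0}. norm (jtheta_term z \<tau> n)) < 1"
proof -
  define a where "a = pi * Im \<tau>"
  define v where "v = exp (- a / 2)"
  have a: "a \<ge> pi * sqrt 3 / 4"
    using assms(1) by (simp add: a_def)
  moreover have "0 \<le> pi * sqrt 3 / 4"
    by simp
  ultimately have "0 \<le> a"
    by linarith
  have "v \<le> exp (- (pi * sqrt 3 / 8))"
    using a by (simp add: v_def)
  then have v: "0 \<le> v" "v \<le> 5 / 9"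
    using exp_neg_pi_sqrt3_div_8_le by (auto simp del: exp_le_cancel_iff simp add: v_def)
  have bound: "norm (jtheta_term z \<tau> n) \<le> theta_majorant v n" for n
    unfolding norm_jtheta_term v_def a_def
    by (rule exp_quadratic_le_theta_majorant) (use assms \<open>0 \<le> a\<close> in \<open>simp_all add: a_def\<close>)
  have majorant: "(theta_majorant v has_sum (v + v\<^sup>2 + 2 * (v ^ 6 / (1 - v ^ 3)))) (- {0})"
    using v by (intro theta_majorant_has_sum) auto
  show summable: "(\<lambda>n. norm (jtheta_term z \<tau> n)) summable_on - {0}"
    using has_sum_imp_summable[OF majorant] bound by (rule Infinite_Sum.abs_summable_on_comparison_test')
  have "(\<Sum>\<^sub>\<infinity>n\<in>- {0}. norm (jtheta_term z \<tau> n)) \<le> v + v\<^sup>2 + 2 * (v ^ 6 / (1 - v ^ 3))"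
    using has_sum_infsum[OF summable] majorant bound by (rule has_sum_mono)
  also have "\<dots> < 1"
    using v by (rule theta_majorant_tail_less_1)
  finally show "(\<Sum>\<^sub>\<infinity>n\<in>- {0}. norm (jtheta_term z \<tau> n)) < 1" .
qed

lemma norm_theta00_diff_theta01_less:
  assumes "Im \<tau> \<ge> sqrt 3 / 4" and "0 \<le> Im z" and "Im z \<le> Im \<tau> / 4"
  shows "cmod (theta00 z \<tau> - theta01 z \<tau>) < cmod (theta00 z \<tau> + theta01 z \<tau>)"
proof -
  have theta00: "theta00 z \<tau> = (\<Sum>\<^sub>\<infinity>n. jtheta_term z \<tau> n)"
    by (simp add: theta00_def jtheta_eq_infsum_term)
  have theta01: "theta01 z \<tau> = (\<Sum>\<^sub>\<infinity>n. (if even n then 1 else -1) * jtheta_term z \<tau> n)"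
    by (simp add: theta01_def jtheta_eq_infsum_term jtheta_term_add_half)
  show ?thesis
    unfolding theta00 theta01
    by (rule norm_diff_less_norm_add_if_dominant_term[where n\<^sub>0 = 0])
       (use jtheta_term_tail_less_1[OF assms] in simp_all)
qed

theorem mainTheorem5:
  fixes z \<tau> :: complex
  assumes "Im \<tau> > 0"
    and "Im \<tau> \<ge> sqrt 3 / 4"
    and "0 \<le> Im z" and "Im z \<le> Im \<tau> / 4"
  shows "cmod (theta00 z \<tau> - theta01 z \<tau>) < cmod (theta00 z \<tau> + theta01 z \<tau>)
    \<and> Re (theta01 z \<tau> / theta00 z \<tau>) > 0
    \<and> Re (theta01 0 \<tau> / theta00 0 \<tau>) > 0"
proof -
  have at_z: "cmod (theta00 z \<tau> - theta01 z \<tau>) < cmod (theta00 z \<tau> + theta01 z \<tau>)"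
    using assms(2-4) by (rule norm_theta00_diff_theta01_less)
  have at_0: "cmod (theta00 0 \<tau> - theta01 0 \<tau>) < cmod (theta00 0 \<tau> + theta01 0 \<tau>)"
    using assms(1,2) by (intro norm_theta00_diff_theta01_less) auto
  show ?thesis
    using at_z at_0 Re_divide_pos_if_norm_diff_less by blast
qed

end
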